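(* Let $\mathcal Q=\{I_j\}_{j\in\mathbb Z}$ be a bounded geometry partition of $\mathbb R$ (identified with $\partial\mathbb H_r$ via $iy\mapsto y$) with constant $C$, normalized so that $I_0=(-1,1)$, and let $1<M<\infty$. Then there is a bounded geometry partition $\mathcal Q'=\{I'_j\}_{j\in\mathbb Z}$ of $\mathbb R$ such that: (1) $I'_0=I_0$; (2) $I'_{-j}=-I'_j$ for all $j$; (3) $|I'_j|$ is a non-increasing function of $|j|$; (4) every $|I'_j|$ is an integer power of $2$; (5) if $I'\in\mathcal Q'\setminus\{I_0\}$ intersects $I\in\mathcal Q$ then $|I'|<|I|/M$; (6) the bounded geometry constant of $\mathcal Q'$ is bounded above by a constant depending only on $M$ and $C$.
   Context: A partition of a line is a locally finite collection of disjoint open intervals whose closures cover the line. It has bounded geometry with constant $C$ if $|I|/|J|\le C$ for every pair of adjacent intervals (sharing an endpoint). *)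

theory Defs
  imports "HOL-Analysis.Analysis"
begin

definition ilen :: "real set \<Rightarrow> real" where
  "ilen I = measure lborel I"

definition is_partition :: "real set set \<Rightarrow> bool" where
  "is_partition P \<longleftrightarrow>
     (\<forall>I\<in>P. is_interval I \<and> open I \<and> I \<noteq> {}) \<and>
     (\<forall>I\<in>P. \<forall>J\<in>P. I \<noteq> J \<longrightarrow> I \<inter> J = {}) \<and>
     (\<forall>x::real. \<exists>U. open U \<and> x \<in> U \<and> finite {I\<in>P. I \<inter> U \<noteq> {}}) \<and>
     \<Union>(closure ` P) = UNIV"

definition adjacent :: "real set \<Rightarrow> real set \<Rightarrow> bool" where
  "adjacent I J \<longleftrightarrow> I \<noteq> J \<and> closure I \<inter> closure J \<noteq> {}"

definition bounded_geometry :: "real set set \<Rightarrow> real \<Rightarrow> bool" where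
  "bounded_geometry P C \<longleftrightarrow>
     (\<forall>I\<in>P. bounded I) \<and>
     (\<forall>I\<in>P. \<forall>J\<in>P. adjacent I J \<longrightarrow> ilen I / ilen J \<le> C)"

definition Z_partition :: "(int \<Rightarrow> real set) \<Rightarrow> bool" where
  "Z_partition I \<longleftrightarrow> is_partition (range I) \<and> inj I \<and>
     (\<forall>j. (\<forall>x\<in>I j. \<forall>y\<in>I (j+1). x < y) \<and> adjacent (I j) (I (j+1)))"

end

theory Submission
  imports Defs
begin

(* The refined partition is built outwards from I_0 = (-1,1) and then reflected in 0: its n-th
   interval to the right of I_0 is (b_(n-1), b_n), of length l_n = l_(n-1) / 2^s with s the least
   exponent for which every interval of Q meeting (-b_n, b_n) is longer than M l_n.  Bounded
   geometry of Q gives s <= s0, where 2^s0 >= 2MC: the intervals of Q meeting (-b_(n-1), b_(n-1))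
   are longer than l_(n-1) / 2, and a new interval of length l_(n-1) / 2^s0 only reaches their
   neighbours, which are shorter by at most the factor C.  Hence consecutive lengths differ by a
   factor at most 2^s0.  The b_n are unbounded: otherwise all intervals of Q near the bounded
   region are longer than some fixed bound, so eventually s = 0, the l_n become constant and
   b_n grows linearly. *)

lemma strict_mono_intI:
  fixes f :: "int \<Rightarrow> 'a::order"
  assumes "\<And>k. f k < f (k + 1)"
  shows "strict_mono f"
proof (rule strict_monoI)
  fix j k :: int
  assume "j < k"
  then show "f j < f k"
  proof (induction k rule: int_gr_induct)
    case base
    then show ?case using assms by simp
  next
    case (step i)
    then show ?case using assms[of i] by order
  qed
qed

lemma int_succ_or_nonpos_cases:
  fixes k :: int
  obtains n where "k = int n + 1" | n where "k = - int n"
proof (cases "0 < k")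
  case True
  then have "k = int (nat (k - 1)) + 1" by simp
  then show ?thesis using that(1) by blast
next
  case False
  then have "k = - int (nat (- k))" by simp
  then show ?thesis using that(2) by blast
qed

lemma ilen_greaterThanLessThan: "a \<le> b \<Longrightarrow> ilen {a<..<b} = b - a"
  by (simp add: ilen_def)

lemma bounded_open_interval_eq:
  fixes S :: "real set"
  assumes iv: "is_interval S" and op: "open S" and ne: "S \<noteq> {}" and bd: "bounded S"
  shows "S = {Inf S<..<Sup S}"
proof
  have ba: "bdd_above S" and bb: "bdd_below S"
    using bd by (simp_all add: bounded_imp_bdd_above bounded_imp_bdd_below)
  show "S \<subseteq> {Inf S<..<Sup S}"
  proof
    fix x assume x: "x \<in> S"
    obtain r where r: "r > 0" "ball x r \<subseteq> S" using op x open_contains_ball by blast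
    have "x + r/2 \<in> S" "x - r/2 \<in> S" using r by (auto intro!: subsetD[OF r(2)] simp: dist_real_def)
    then have "x + r/2 \<le> Sup S" "Inf S \<le> x - r/2" using ba bb by (simp_all add: cSup_upper cInf_lower)
    then show "x \<in> {Inf S<..<Sup S}" using r by simp
  qed
  show "{Inf S<..<Sup S} \<subseteq> S"
  proof
    fix x assume "x \<in> {Inf S<..<Sup S}"
    then obtain a b where "a \<in> S" "a < x" "b \<in> S" "x < b"
      using cInf_less_iff[OF ne bb] less_cSup_iff[OF ne ba] by auto
    then show "x \<in> S" using iv unfolding is_interval_1 by (meson less_imp_le)
  qed
qed

section \<open>Partitions given by their endpoints\<close>

locale unbounded_strict_mono =
  fixes e :: "int \<Rightarrow> real"
  assumes strict_mono: "strict_mono e"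
    and unbounded_above: "\<And>x. \<exists>k. x < e k"
    and unbounded_below: "\<And>x. \<exists>k. e k < x"
begin

lemma less_succ: "e k < e (k + 1)"
  using strict_mono by (simp add: strict_mono_less)

lemma less_iff [simp]: "e j < e k \<longleftrightarrow> j < k"
  using strict_mono by (rule strict_mono_less)

lemma le_iff [simp]: "e j \<le> e k \<longleftrightarrow> j \<le> k"
  using strict_mono by (rule strict_mono_less_eq)

lemma interval_containing: obtains p where "e p \<le> x" "x < e (p + 1)"
proof -
  obtain k1 where k1: "x < e k1" using unbounded_above by blast
  obtain k0 where k0: "e k0 < x" using unbounded_below by blast
  define S where "S = {k. k0 \<le> k \<and> e k \<le> x}"
  have "S \<subseteq> {k0..k1}"
  proof
    fix k assume "k \<in> S"
    then have "k0 \<le> k" "e k \<le> x" by (simp_all add: S_def)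
    then have "k0 \<le> k" "e k < e k1" using k1 by linarith+
    then show "k \<in> {k0..k1}" by simp
  qed
  then have fin: "finite S" by (rule finite_subset) simp
  have "Max S \<in> S" using fin k0 by (intro Max_in) (auto simp: S_def)
  moreover have "Max S + 1 \<notin> S" using Max_ge[OF fin, of "Max S + 1"] by auto
  ultimately show ?thesis using that by (auto simp: S_def)
qed

lemma interval_containing': obtains p where "e p < x" "x \<le> e (p + 1)"
proof -
  obtain p where p: "e p \<le> x" "x < e (p + 1)" by (rule interval_containing)
  show ?thesis
  proof (cases "e p = x")
    case True
    then show ?thesis using that[of "p - 1"] less_succ[of "p - 1"] by simp
  next
    case False
    then show ?thesis using that[of p] p by simp
  qed
qed

lemma finite_intervals_meeting: "finite {k. e k < b \<and> a < e (k + 1)}"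
proof -
  obtain k1 where k1: "b < e k1" using unbounded_above by blast
  obtain k0 where k0: "e k0 < a" using unbounded_below by blast
  have "{k. e k < b \<and> a < e (k + 1)} \<subseteq> {k0..k1}"
  proof
    fix k assume "k \<in> {k. e k < b \<and> a < e (k + 1)}"
    then have "e k < b" "a < e (k + 1)" by simp_all
    then have "e k < e k1" "e k0 < e (k + 1)" using k0 k1 by linarith+
    then show "k \<in> {k0..k1}" by simp
  qed
  then show ?thesis by (rule finite_subset) simp
qed

lemma intervals_disjoint:
  "j \<noteq> k \<Longrightarrow> {e j<..<e (j + 1)} \<inter> {e k<..<e (k + 1)} = {}"
proof (induction j k rule: linorder_less_wlog)
  case (less j k)
  then have "e (j + 1) \<le> e k" by simp
  then show ?case by auto
qed (auto simp: Int_commute)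

lemma adjacent_intervals_index:
  assumes "adjacent {e j<..<e (j + 1)} {e k<..<e (k + 1)}"
  shows "k = j + 1 \<or> j = k + 1"
proof -
  obtain x where "x \<in> closure {e j<..<e (j + 1)} \<inter> closure {e k<..<e (k + 1)}"
    using assms unfolding adjacent_def by blast
  then have "e j \<le> x" "x \<le> e (j + 1)" "e k \<le> x" "x \<le> e (k + 1)"
    using less_succ[of j] less_succ[of k] by auto
  then have "e k \<le> e (j + 1)" "e j \<le> e (k + 1)" by linarith+
  moreover have "j \<noteq> k" using assms by (auto simp: adjacent_def)
  ultimately show ?thesis unfolding le_iff by linarith
qed

lemma is_partition_intervals: "is_partition (range (\<lambda>k. {e k<..<e (k + 1)}))"
  unfolding is_partition_def
proof (intro conjI)
  let ?I = "\<lambda>k. {e k<..<e (k + 1)}"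
  show "\<forall>J\<in>range ?I. is_interval J \<and> open J \<and> J \<noteq> {}"
    using less_succ by (simp add: is_interval_oo)
  show "\<forall>J\<in>range ?I. \<forall>J'\<in>range ?I. J \<noteq> J' \<longrightarrow> J \<inter> J' = {}"
  proof (intro ballI impI)
    fix J J' assume "J \<in> range ?I" "J' \<in> range ?I" "J \<noteq> J'"
    then obtain j k where "J = ?I j" "J' = ?I k" "j \<noteq> k" by blast
    then show "J \<inter> J' = {}" using intervals_disjoint by simp
  qed
  show "\<forall>x. \<exists>U. open U \<and> x \<in> U \<and> finite {J \<in> range ?I. J \<inter> U \<noteq> {}}"
  proof
    fix x :: real
    have "{J \<in> range ?I. J \<inter> {x - 1<..<x + 1} \<noteq> {}} \<subseteq> ?I ` {k. e k < x + 1 \<and> x - 1 < e (k + 1)}"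
      by auto
    then have "finite {J \<in> range ?I. J \<inter> {x - 1<..<x + 1} \<noteq> {}}"
      by (rule finite_subset) (intro finite_imageI finite_intervals_meeting)
    then show "\<exists>U. open U \<and> x \<in> U \<and> finite {J \<in> range ?I. J \<inter> U \<noteq> {}}"
      by (intro exI[of _ "{x - 1<..<x + 1}"]) simp
  qed
  have "x \<in> \<Union> (closure ` range ?I)" for x
  proof -
    obtain p where "e p \<le> x" "x < e (p + 1)" by (rule interval_containing)
    then have "x \<in> closure (?I p)" by simp
    then show ?thesis by blast
  qed
  then show "\<Union> (closure ` range ?I) = UNIV" by blast
qed

lemma Z_partition_intervals: "Z_partition (\<lambda>k. {e k<..<e (k + 1)})"
proof -
  let ?I = "\<lambda>k. {e k<..<e (k + 1)}"
  have nonempty: "?I k \<noteq> {}" for k using less_succ[of k] by simp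
  have distinct: "?I j \<noteq> ?I k" if "j \<noteq> k" for j k
  proof
    assume "?I j = ?I k"
    then have "?I j = {}" using intervals_disjoint[OF that] by simp
    then show False using nonempty by simp
  qed
  then have "inj ?I" by (meson injI)
  moreover have "adjacent (?I k) (?I (k + 1))" for k
  proof -
    have "e (k + 1) \<in> closure (?I k) \<inter> closure (?I (k + 1))"
      using less_succ[of k] less_succ[of "k + 1"] by simp
    then show ?thesis using distinct[of k "k + 1"] unfolding adjacent_def by auto
  qed
  moreover have "\<forall>x\<in>?I k. \<forall>y\<in>?I (k + 1). x < y" for k by auto
  ultimately show ?thesis using is_partition_intervals unfolding Z_partition_def by blast
qed

lemma bounded_geometry_intervals_iff:
  "bounded_geometry (range (\<lambda>k. {e k<..<e (k + 1)})) C \<longleftrightarrow>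
     (\<forall>k. e (k + 1) - e k \<le> C * (e (k + 2) - e (k + 1)) \<and>
          e (k + 2) - e (k + 1) \<le> C * (e (k + 1) - e k))"
  (is "?bg \<longleftrightarrow> ?ratios")
proof
  let ?I = "\<lambda>k. {e k<..<e (k + 1)}"
  have len: "ilen {e j<..<e k} = e k - e j" if "j \<le> k" for j k
    using that by (simp add: ilen_greaterThanLessThan)
  have pos: "0 < e (k + 1) - e k" for k using less_succ[of k] by simp
  have adj: "adjacent (?I k) (?I (k + 1))" "adjacent (?I (k + 1)) (?I k)" for k
    using Z_partition_intervals by (auto simp: Z_partition_def adjacent_def)
  assume ?bg
  then have "ilen (?I j) / ilen (?I k) \<le> C" if "adjacent (?I j) (?I k)" for j k
    using that by (auto simp: bounded_geometry_def)
  from this[OF adj(1)] this[OF adj(2)] show ?ratios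
    using pos by (simp add: len pos_divide_le_eq add.assoc mult.commute)
next
  let ?I = "\<lambda>k. {e k<..<e (k + 1)}"
  assume ?ratios
  have "ilen (?I j) / ilen (?I k) \<le> C" if "adjacent (?I j) (?I k)" for j k
  proof -
    have "0 < e (j + 1) - e j" "0 < e (k + 1) - e k" using less_succ by simp_all
    moreover have "k = j + 1 \<or> j = k + 1" using that by (rule adjacent_intervals_index)
    ultimately show ?thesis using \<open>?ratios\<close> less_succ[of j] less_succ[of k]
      by (auto simp: ilen_greaterThanLessThan pos_divide_le_eq add.assoc mult.commute)
  qed
  then show ?bg by (auto simp: bounded_geometry_def)
qed

end

lemma Z_partition_interval_eq:
  assumes "Z_partition I" and "\<forall>J\<in>range I. bounded J"
  shows "I k = {Inf (I k)<..<Sup (I k)}" and "Inf (I k) < Sup (I k)"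
proof -
  have P: "is_partition (range I)" using assms(1) by (simp add: Z_partition_def)
  show eq: "I k = {Inf (I k)<..<Sup (I k)}"
    using P assms(2) by (intro bounded_open_interval_eq) (auto simp: is_partition_def)
  have "I k \<noteq> {}" using P by (auto simp: is_partition_def)
  then show "Inf (I k) < Sup (I k)" using eq by (metis greaterThanLessThan_empty_iff not_le)
qed

lemma Z_partition_Sup_eq_Inf_succ:
  assumes Z: "Z_partition I" and bounded: "\<forall>J\<in>range I. bounded J"
  shows "Sup (I k) = Inf (I (k + 1))"
proof -
  define c where "c k = Inf (I k)" for k
  define d where "d k = Sup (I k)" for k
  have I_eq: "I k = {c k<..<d k}" and cd: "c k < d k" for k
    unfolding c_def d_def using Z_partition_interval_eq[OF Z bounded] by blast+
  have "d k \<le> c (k + 1)"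
  proof (rule ccontr)
    assume "\<not> d k \<le> c (k + 1)"
    define y where "y = (c (k + 1) + min (d k) (d (k + 1))) / 2"
    have "c (k + 1) < y" "y < d (k + 1)" "y < d k"
      unfolding y_def using \<open>\<not> d k \<le> c (k + 1)\<close> cd[of "k + 1"] by (simp_all add: min_def)
    define x where "x = (max y (c k) + d k) / 2"
    have "y < x" "c k < x" "x < d k"
      unfolding x_def using \<open>y < d k\<close> cd[of k] by (simp_all add: max_def)
    have "y \<in> I (k + 1)" "x \<in> I k" "y < x"
      unfolding I_eq by (simp_all add: \<open>c (k + 1) < y\<close> \<open>y < d (k + 1)\<close> \<open>y < x\<close> \<open>c k < x\<close> \<open>x < d k\<close>)
    then show False using Z[unfolded Z_partition_def] by fastforce
  qed
  moreover have "c (k + 1) \<le> d k"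
  proof -
    obtain x where "x \<in> closure (I k) \<inter> closure (I (k + 1))"
      using Z unfolding Z_partition_def adjacent_def by blast
    then show ?thesis using cd[of k] cd[of "k + 1"] by (auto simp: I_eq)
  qed
  ultimately show ?thesis unfolding c_def d_def by simp
qed

lemma Z_partition_endpoints:
  assumes Z: "Z_partition I" and bounded: "\<forall>J\<in>range I. bounded J"
  obtains e where "unbounded_strict_mono e" "\<And>k. I k = {e k<..<e (k + 1)}"
proof -
  define c where "c k = Inf (I k)" for k
  have I_eq: "I k = {c k<..<c (k + 1)}" and less: "c k < c (k + 1)" for k
    using Z_partition_interval_eq[OF Z bounded, of k] Z_partition_Sup_eq_Inf_succ[OF Z bounded, of k]
    unfolding c_def by simp_all
  have cover: "\<exists>k. c k \<le> x \<and> x \<le> c (k + 1)" for x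
  proof -
    have "x \<in> \<Union> (closure ` range I)" using Z by (simp add: Z_partition_def is_partition_def)
    then obtain k where "x \<in> closure (I k)" by blast
    then show ?thesis using I_eq[of k] less[of k] by auto
  qed
  have "unbounded_strict_mono c"
  proof
    show "strict_mono c" by (rule strict_mono_intI) (rule less)
    show "\<exists>k. x < c k" for x
    proof -
      obtain k where "x + 1 \<le> c (k + 1)" using cover by blast
      then show ?thesis by (intro exI[of _ "k + 1"]) simp
    qed
    show "\<exists>k. c k < x" for x
    proof -
      obtain k where "c k \<le> x - 1" using cover by blast
      then show ?thesis by (intro exI[of _ k]) simp
    qed
  qed
  then show ?thesis using that I_eq by blast
qed

section \<open>Intervals that are long compared to a scale\<close>

definition gaps_exceed :: "(int \<Rightarrow> real) \<Rightarrow> real \<Rightarrow> real \<Rightarrow> real \<Rightarrow> bool" where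
  "gaps_exceed e M t l \<longleftrightarrow> (\<forall>k. e k < t \<and> - t < e (k + 1) \<longrightarrow> M * l < e (k + 1) - e k)"

lemma gaps_exceed_mono:
  assumes "gaps_exceed e M t l" "t' \<le> t" "l' \<le> l" "0 \<le> M"
  shows "gaps_exceed e M t' l'"
  unfolding gaps_exceed_def
proof (intro allI impI)
  fix k assume "e k < t' \<and> - t' < e (k + 1)"
  then have "M * l < e (k + 1) - e k" using assms(1,2) unfolding gaps_exceed_def by auto
  moreover have "M * l' \<le> M * l" using assms by (simp add: mult_left_mono)
  ultimately show "M * l' < e (k + 1) - e k" by linarith
qed

context unbounded_strict_mono
begin

lemma gaps_exceed_exists:
  assumes "0 < M"
  obtains l where "0 < l" "gaps_exceed e M t l"
proof -
  define m where "m = Min (insert 1 ((\<lambda>k. e (k + 1) - e k) ` {k. e k < t \<and> - t < e (k + 1)}))"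
  have fin: "finite (insert 1 ((\<lambda>k. e (k + 1) - e k) ` {k. e k < t \<and> - t < e (k + 1)}))"
    using finite_intervals_meeting by simp
  have "0 < m" unfolding m_def using fin less_succ by (subst Min_gr_iff) auto
  moreover have "m \<le> e (k + 1) - e k" if "e k < t \<and> - t < e (k + 1)" for k
    unfolding m_def using fin that by (intro Min_le) auto
  moreover have "M * (m / (2 * M)) = m / 2" using assms by simp
  ultimately have "gaps_exceed e M t (m / (2 * M))"
    unfolding gaps_exceed_def by force
  then show ?thesis using \<open>0 < m\<close> assms by (intro that[of "m / (2 * M)"]) simp_all
qed

end

lemma mult_less_of_ratio_le:
  fixes C M l l' g :: real
  assumes "0 < C" "0 \<le> M" "C * l' \<le> l" "M * l < C * g"
  shows "M * l' < g"
proof -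
  have "M * (C * l') \<le> M * l" by (rule mult_left_mono[OF assms(3,2)])
  then have "C * (M * l') \<le> M * l" by (simp add: algebra_simps)
  then have "C * (M * l') < C * g" using assms(4) by linarith
  then show ?thesis using assms(1) by simp
qed

locale bounded_gap_ratio = unbounded_strict_mono +
  fixes C :: real
  assumes gap_le_next: "\<And>k. e (k + 1) - e k \<le> C * (e (k + 2) - e (k + 1))"
    and next_gap_le: "\<And>k. e (k + 2) - e (k + 1) \<le> C * (e (k + 1) - e k)"
begin

lemma one_le_ratio: "1 \<le> C"
proof (rule ccontr)
  assume "\<not> 1 \<le> C"
  moreover have "0 < e 1 - e 0" "0 < e 2 - e 1" using less_succ[of 0] less_succ[of 1] by simp_all
  moreover have "e 1 - e 0 \<le> C * (e 2 - e 1)" "e 2 - e 1 \<le> C * (e 1 - e 0)"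
    using gap_le_next[of 0] next_gap_le[of 0] by simp_all
  moreover have "C * (e 2 - e 1) < e 2 - e 1" "C * (e 1 - e 0) < e 1 - e 0"
    using calculation by (simp_all add: mult_less_cancel_right2)
  ultimately show False by linarith
qed

lemma ratio_pos: "0 < C"
  using one_le_ratio by simp

lemma gap_right_of_scale:
  assumes "1 \<le> M" "0 < t" "gaps_exceed e M t l" "0 \<le> l'" "C * l' \<le> l"
    and k: "t \<le> e k" "e k < t + l'"
  shows "M * l' < e (k + 1) - e k"
proof -
  obtain p where p: "e p < t" "t \<le> e (p + 1)" by (rule interval_containing')
  have "M * l < e (p + 1) - e p" using assms(2,3) p unfolding gaps_exceed_def by force
  then have "M * l < C * (e (p + 2) - e (p + 1))" using gap_le_next[of p] by linarith
  then have next_long: "M * l' < e (p + 2) - e (p + 1)"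
    using assms(1) by (intro mult_less_of_ratio_le[OF ratio_pos _ assms(5)]) simp_all
  moreover have "l' \<le> M * l'" using assms(1,4) by (simp add: mult_le_cancel_right1)
  ultimately have "k = p + 1" using k p less_iff[of k "p + 2"] less_iff[of p k] by linarith
  then show ?thesis using next_long by (simp add: add.assoc)
qed

lemma gap_left_of_scale:
  assumes "1 \<le> M" "0 < t" "gaps_exceed e M t l" "0 \<le> l'" "C * l' \<le> l"
    and k: "e (k + 1) \<le> - t" "- (t + l') < e (k + 1)"
  shows "M * l' < e (k + 1) - e k"
proof -
  obtain p where p: "e p \<le> - t" "- t < e (p + 1)" by (rule interval_containing)
  have "M * l < e (p + 1) - e p" using assms(2,3) p unfolding gaps_exceed_def by force
  moreover have "e (p + 1) - e p \<le> C * (e p - e (p - 1))"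
    using next_gap_le[of "p - 1"] by (simp add: add.commute)
  ultimately have "M * l < C * (e p - e (p - 1))" by linarith
  then have prev_long: "M * l' < e p - e (p - 1)"
    using assms(1) by (intro mult_less_of_ratio_le[OF ratio_pos _ assms(5)]) simp_all
  moreover have "l' \<le> M * l'" using assms(1,4) by (simp add: mult_le_cancel_right1)
  ultimately have "k = p - 1"
    using k p less_iff[of "p - 1" "k + 1"] less_iff[of "k + 1" "p + 1"] by linarith
  then show ?thesis using prev_long by simp
qed

lemma gaps_exceed_extend:
  assumes "1 \<le> M" "0 < t" "gaps_exceed e M t l" "0 < l'" "C * l' \<le> l"
  shows "gaps_exceed e M (t + l') l'"
  unfolding gaps_exceed_def
proof (intro allI impI)
  fix k assume k: "e k < t + l' \<and> - (t + l') < e (k + 1)"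
  have "l' \<le> C * l'" using one_le_ratio assms(4) by simp
  then have "l' \<le> l" using assms(5) by linarith
  then have "gaps_exceed e M t l'" using assms(1) by (intro gaps_exceed_mono[OF assms(3)]) simp_all
  consider "e k < t \<and> - t < e (k + 1)" | "t \<le> e k" | "e (k + 1) \<le> - t" by linarith
  then show "M * l' < e (k + 1) - e k"
  proof cases
    case 1
    then show ?thesis using \<open>gaps_exceed e M t l'\<close> unfolding gaps_exceed_def by blast
  next
    case 2
    then show ?thesis using assms k by (intro gap_right_of_scale) auto
  next
    case 3
    then show ?thesis using assms k by (intro gap_left_of_scale) auto
  qed
qed

end

section \<open>The refinement\<close>

text \<open>The state \<open>(b, l)\<close> is the right endpoint and the length of the last interval built.\<close>
definition refine_step :: "(int \<Rightarrow> real) \<Rightarrow> real \<Rightarrow> real \<times> real \<Rightarrow> real \<times> real" where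
  "refine_step e M = (\<lambda>(b, l).
     let s = LEAST s::nat. gaps_exceed e M (b + l / 2 ^ s) (l / 2 ^ s) in (b + l / 2 ^ s, l / 2 ^ s))"

lemma refine_step_least:
  assumes "gaps_exceed e M (b + l / 2 ^ s) (l / 2 ^ s)"
  obtains s' where "s' \<le> s" "refine_step e M (b, l) = (b + l / 2 ^ s', l / 2 ^ s')"
    "gaps_exceed e M (b + l / 2 ^ s') (l / 2 ^ s')"
proof -
  let ?s = "LEAST s::nat. gaps_exceed e M (b + l / 2 ^ s) (l / 2 ^ s)"
  have "gaps_exceed e M (b + l / 2 ^ ?s) (l / 2 ^ ?s)" using assms by (rule LeastI)
  moreover have "?s \<le> s" using assms by (rule Least_le)
  ultimately show ?thesis using that by (simp add: refine_step_def Let_def)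
qed

definition scale_exponent :: "real \<Rightarrow> real \<Rightarrow> nat" where
  "scale_exponent M C = (LEAST s. 2 * M * C \<le> 2 ^ s)"

lemma le_two_power_scale_exponent: "2 * M * C \<le> 2 ^ scale_exponent M C"
  unfolding scale_exponent_def by (rule LeastI_ex) (use real_arch_pow[of 2 "2 * M * C"] in \<open>auto intro: less_imp_le\<close>)

locale symmetric_refinement = bounded_gap_ratio +
  fixes M :: real
  assumes one_less_M: "1 < M" and e_0: "e 0 = -1" and e_1: "e 1 = 1"
begin

text \<open>\<open>B n = b\<^sub>n\<close> and \<open>L n = l\<^sub>n\<close>; \<open>B 0 = 1\<close> and \<open>L 0 = 2\<close> describe \<open>I\<^sub>0\<close> itself.\<close>
definition B :: "nat \<Rightarrow> real" where "B n = fst ((refine_step e M ^^ n) (1, 2))"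
definition L :: "nat \<Rightarrow> real" where "L n = snd ((refine_step e M ^^ n) (1, 2))"

lemma B_0 [simp]: "B 0 = 1" and L_0 [simp]: "L 0 = 2"
  by (simp_all add: B_def L_def)

lemma B_L_Suc: "(B (Suc n), L (Suc n)) = refine_step e M (B n, L n)"
  by (simp add: B_def L_def)

lemma gaps_exceed_initial: "gaps_exceed e M 1 (1 / M)"
  unfolding gaps_exceed_def
proof (intro allI impI)
  fix k assume "e k < 1 \<and> - 1 < e (k + 1)"
  then have "k = 0" using e_0 e_1 less_iff[of k 1] less_iff[of 0 "k + 1"] by auto
  then show "M * (1 / M) < e (k + 1) - e k" using e_0 e_1 one_less_M by simp
qed

lemma refine_step_bounded:
  assumes "0 < L n" "1 \<le> B n" "gaps_exceed e M (B n) (L n / (2 * M))"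
  obtains s where "s \<le> scale_exponent M C" "B (Suc n) = B n + L n / 2 ^ s" "L (Suc n) = L n / 2 ^ s"
    "gaps_exceed e M (B (Suc n)) (L (Suc n))"
proof -
  let ?w = "scale_exponent M C"
  have "C * (L n / 2 ^ ?w) \<le> L n / (2 * M)"
    using le_two_power_scale_exponent[of M C] assms(1) one_less_M
    by (simp add: field_simps mult_right_mono)
  then have "gaps_exceed e M (B n + L n / 2 ^ ?w) (L n / 2 ^ ?w)"
    using assms one_less_M by (intro gaps_exceed_extend) auto
  then obtain s where "s \<le> ?w" "refine_step e M (B n, L n) = (B n + L n / 2 ^ s, L n / 2 ^ s)"
    "gaps_exceed e M (B n + L n / 2 ^ s) (L n / 2 ^ s)"
    by (rule refine_step_least)
  then show ?thesis using that B_L_Suc[of n] by simp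
qed

text \<open>At \<open>n = 0\<close> only the scale \<open>L 0 / (2 * M) = 1 / M\<close> is valid, since \<open>I\<^sub>0\<close> belongs to
  both partitions; for \<open>n > 0\<close> the scale \<open>L n\<close> itself is valid.\<close>
lemma refinement_invariant: "0 < L n \<and> 1 \<le> B n \<and> gaps_exceed e M (B n) (L n / (2 * M))"
proof (induction n)
  case 0
  then show ?case using gaps_exceed_initial by simp
next
  case (Suc n)
  then have "0 < L n" "1 \<le> B n" "gaps_exceed e M (B n) (L n / (2 * M))" by blast+
  then obtain s where s: "B (Suc n) = B n + L n / 2 ^ s" "L (Suc n) = L n / 2 ^ s"
    "gaps_exceed e M (B (Suc n)) (L (Suc n))"
    by (rule refine_step_bounded)
  have "0 < L (Suc n)" using \<open>0 < L n\<close> s(2) by simp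
  moreover have "1 \<le> B (Suc n)" using \<open>1 \<le> B n\<close> \<open>0 < L (Suc n)\<close> s(1,2) by simp
  moreover have "L (Suc n) / (2 * M) \<le> L (Suc n)" using \<open>0 < L (Suc n)\<close> one_less_M
    by (simp add: divide_le_eq)
  ultimately show ?case using s(3) one_less_M by (auto intro: gaps_exceed_mono)
qed

lemma scale_step:
  "\<exists>s \<le> scale_exponent M C. B (Suc n) = B n + L (Suc n) \<and> L n = 2 ^ s * L (Suc n) \<and>
     gaps_exceed e M (B (Suc n)) (L (Suc n))"
proof -
  have "0 < L n" "1 \<le> B n" "gaps_exceed e M (B n) (L n / (2 * M))"
    using refinement_invariant by blast+
  then obtain s where s: "s \<le> scale_exponent M C" "B (Suc n) = B n + L n / 2 ^ s"
    "L (Suc n) = L n / 2 ^ s" "gaps_exceed e M (B (Suc n)) (L (Suc n))"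
    by (rule refine_step_bounded)
  have "B (Suc n) = B n + L (Suc n)" using s(2,3) by simp
  moreover have "L n = 2 ^ s * L (Suc n)" using s(3) by simp
  ultimately show ?thesis using s(1,4) by blast
qed

lemma L_pos: "0 < L n"
  using refinement_invariant by blast

lemma B_Suc: "B (Suc n) = B n + L (Suc n)"
  using scale_step[of n] by blast

lemma L_Suc_le: "L (Suc n) \<le> L n"
proof -
  obtain s where "L n = 2 ^ s * L (Suc n)" using scale_step[of n] by blast
  then show ?thesis using L_pos[of "Suc n"] by (simp add: mult_le_cancel_right1)
qed

lemma L_antimono: "m \<le> n \<Longrightarrow> L n \<le> L m"
  by (rule lift_Suc_antimono_le[of L, OF L_Suc_le])

lemma L_le_ratio_L_Suc: "L n \<le> 2 ^ scale_exponent M C * L (Suc n)"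
proof -
  obtain s where "s \<le> scale_exponent M C" "L n = 2 ^ s * L (Suc n)" using scale_step[of n] by blast
  moreover have "(2::real) ^ s \<le> 2 ^ scale_exponent M C" using calculation(1) by (rule power_increasing) simp
  ultimately show ?thesis using L_pos[of "Suc n"] by (simp add: mult_right_mono)
qed

lemma gaps_exceed_scale:
  assumes "0 < n" shows "gaps_exceed e M (B n) (L n)"
proof -
  obtain m where "n = Suc m" using assms gr0_implies_Suc by blast
  then show ?thesis using scale_step[of m] by blast
qed

lemma L_power_of_two: "\<exists>z::int. L n = 2 powi z"
proof (induction n)
  case 0
  then show ?case by (intro exI[of _ 1]) simp
next
  case (Suc n)
  obtain z where z: "L n = 2 powi z" using Suc by blast
  obtain s where "L n = 2 ^ s * L (Suc n)" using scale_step[of n] by blast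
  then have "L (Suc n) = 2 powi (z - int s)" by (simp add: z power_int_diff power_int_of_nat)
  then show ?case by blast
qed

lemma B_ge_linear:
  assumes "\<And>n. c \<le> L n" shows "1 + real n * c \<le> B n"
proof (induction n)
  case (Suc n)
  have "real (Suc n) * c = real n * c + c" by (simp add: algebra_simps)
  then show ?case using Suc.IH assms[of "Suc n"] B_Suc[of n] by linarith
qed simp

lemma L_Suc_eq:
  assumes "gaps_exceed e M (B n + L n) (L n)" shows "L (Suc n) = L n"
proof -
  have "gaps_exceed e M (B n + L n / 2 ^ 0) (L n / 2 ^ 0)" using assms by simp
  then obtain s where "s \<le> 0" "refine_step e M (B n, L n) = (B n + L n / 2 ^ s, L n / 2 ^ s)"
    "gaps_exceed e M (B n + L n / 2 ^ s) (L n / 2 ^ s)"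
    by (rule refine_step_least)
  then show ?thesis using B_L_Suc[of n] by simp
qed

lemma L_bounded_below:
  assumes "\<And>n. B n \<le> x"
  shows "\<exists>c>0. \<forall>n. c \<le> L n"
proof -
  have "0 < M" using one_less_M by simp
  then obtain l where l: "0 < l" "gaps_exceed e M (x + 2) l" by (rule gaps_exceed_exists)
  show ?thesis
  proof (cases "\<forall>n. l \<le> L n")
    case True
    then show ?thesis using l by blast
  next
    case False
    then obtain N where N: "L N < l" by (auto simp: not_le)
    have stable: "L (N + j) = L N" for j
    proof (induction j)
      case (Suc j)
      have "B (N + j) + L (N + j) \<le> x + 2"
        using assms[of "N + j"] L_antimono[of 0 "N + j"] by simp
      then have "gaps_exceed e M (B (N + j) + L (N + j)) (L (N + j))"
        using l N Suc one_less_M by (intro gaps_exceed_mono[OF l(2)]) auto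
      then show ?case using Suc by (simp add: L_Suc_eq)
    qed simp
    have "L N \<le> L n" for n
      using L_antimono[of n N] stable[of "n - N"] by (cases "n \<le> N") auto
    then show ?thesis using L_pos by blast
  qed
qed

lemma B_unbounded: "\<exists>n. x < B n"
proof (rule ccontr)
  assume "\<not> (\<exists>n. x < B n)"
  then have "B n \<le> x" for n by (simp add: not_less)
  then obtain c where c: "0 < c" "\<forall>n. c \<le> L n" using L_bounded_below by blast
  obtain n where "x < real n * c" using ex_less_of_nat_mult[OF c(1)] by blast
  moreover have "1 + real n * c \<le> B n" using c(2) by (intro B_ge_linear) blast
  ultimately show False using \<open>\<And>n. B n \<le> x\<close>[of n] by linarith
qed

end

section \<open>Symmetric extension of a sequence of endpoints\<close>

definition symmetric_extension :: "(nat \<Rightarrow> real) \<Rightarrow> int \<Rightarrow> real" where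
  "symmetric_extension b k = (if 0 < k then b (nat (k - 1)) else - b (nat (- k)))"

lemma symmetric_extension_succ [simp]: "symmetric_extension b (int n + 1) = b n"
  and symmetric_extension_minus [simp]: "symmetric_extension b (- int n) = - b n"
  by (simp_all add: symmetric_extension_def)

lemma symmetric_extension_uminus: "symmetric_extension b (- k) = - symmetric_extension b (k + 1)"
proof (cases k rule: int_succ_or_nonpos_cases)
  case (1 n)
  then have "- k = - int (Suc n)" and "k + 1 = int (Suc n) + 1" by simp_all
  then show ?thesis by (simp only: symmetric_extension_succ symmetric_extension_minus)
next
  case (2 n)
  then show ?thesis
    by (cases n) (simp_all add: symmetric_extension_def nat_add_distrib)
qed

lemma symmetric_extension_gap:
  assumes "2 * b 0 = l 0" "\<And>n. b (Suc n) = b n + l (Suc n)"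
  shows "symmetric_extension b (k + 1) - symmetric_extension b k = l (nat \<bar>k\<bar>)"
proof (cases k rule: int_succ_or_nonpos_cases)
  case (1 n)
  then have "k + 1 = int (Suc n) + 1" "nat \<bar>k\<bar> = Suc n" by simp_all
  then show ?thesis using 1 assms(2) by (simp only: symmetric_extension_succ)
next
  case (2 n)
  then show ?thesis using assms
    by (cases n) (simp_all add: symmetric_extension_def nat_add_distrib)
qed

lemma abs_less_symmetric_extension:
  assumes "incseq b" "0 \<le> b 0" "x \<in> {symmetric_extension b k<..<symmetric_extension b (k + 1)}"
  shows "\<bar>x\<bar> < b (nat \<bar>k\<bar>)"
proof -
  have nonneg: "0 \<le> b n" for n using assms(2) monoD[OF assms(1), of 0 n] by simp
  show ?thesis
  proof (cases k rule: int_succ_or_nonpos_cases)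
    case (1 n)
    then have "k + 1 = int (Suc n) + 1" "nat \<bar>k\<bar> = Suc n" by simp_all
    then have "symmetric_extension b (k + 1) = b (nat \<bar>k\<bar>)"
      by (simp only: symmetric_extension_succ)
    moreover have "symmetric_extension b k = b n" using 1 by simp
    ultimately show ?thesis using assms(3) nonneg[of n] by auto
  next
    case (2 n)
    show ?thesis
    proof (cases n)
      case 0
      then have "k = 0" using 2 by simp
      then show ?thesis
        using assms(3) symmetric_extension_succ[of b 0] symmetric_extension_minus[of b 0] by auto
    next
      case (Suc m)
      then have "k + 1 = - int m" using 2 by simp
      then have "symmetric_extension b (k + 1) = - b m" by (simp only: symmetric_extension_minus)
      moreover have "symmetric_extension b k = - b (nat \<bar>k\<bar>)" using 2 by simp
      ultimately show ?thesis using assms(3) nonneg[of m] by auto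
    qed
  qed
qed

context symmetric_refinement
begin

definition refined :: "int \<Rightarrow> real set" where
  "refined k = {symmetric_extension B k<..<symmetric_extension B (k + 1)}"

lemma refined_gap: "symmetric_extension B (k + 1) - symmetric_extension B k = L (nat \<bar>k\<bar>)"
  by (rule symmetric_extension_gap) (simp_all add: B_Suc)

lemma unbounded_strict_mono_refined: "unbounded_strict_mono (symmetric_extension B)"
proof
  show "strict_mono (symmetric_extension B)"
    by (rule strict_mono_intI) (use refined_gap L_pos in \<open>simp add: algebra_simps\<close>)
  show "\<exists>k. x < symmetric_extension B k" for x
  proof -
    obtain n where "x < B n" using B_unbounded by blast
    then have "x < symmetric_extension B (int n + 1)" by simp
    then show ?thesis by blast
  qed
  show "\<exists>k. symmetric_extension B k < x" for x
  proof -
    obtain n where "- x < B n" using B_unbounded by blast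
    then have "symmetric_extension B (- int n) < x" by simp
    then show ?thesis by blast
  qed
qed

interpretation refined: unbounded_strict_mono "symmetric_extension B"
  by (rule unbounded_strict_mono_refined)

lemma Z_partition_refined: "Z_partition refined"
  unfolding refined_def by (rule refined.Z_partition_intervals)

lemma refined_0: "refined 0 = {-1<..<1}"
  using symmetric_extension_succ[of B 0] symmetric_extension_minus[of B 0]
  by (simp add: refined_def)

lemma refined_uminus: "refined (- k) = uminus ` refined k"
  using symmetric_extension_uminus[of B k] symmetric_extension_uminus[of B "k - 1"]
  by (simp add: refined_def)

lemma ilen_refined: "ilen (refined k) = L (nat \<bar>k\<bar>)"
  using refined_gap[of k] refined.less_succ[of k] by (simp add: refined_def ilen_greaterThanLessThan)

lemma ilen_refined_antimono: "\<bar>j\<bar> \<le> \<bar>k\<bar> \<Longrightarrow> ilen (refined k) \<le> ilen (refined j)"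
  by (simp add: ilen_refined L_antimono)

lemma ilen_refined_power_of_two: "\<exists>z::int. ilen (refined k) = 2 powi z"
  by (simp add: ilen_refined L_power_of_two)

lemma ilen_refined_less:
  assumes "k \<noteq> 0" "refined k \<inter> {e j<..<e (j + 1)} \<noteq> {}"
  shows "ilen (refined k) < (e (j + 1) - e j) / M"
proof -
  obtain x where x: "x \<in> refined k" "e j < x" "x < e (j + 1)" using assms(2) by auto
  have "\<bar>x\<bar> < B (nat \<bar>k\<bar>)"
    using x(1) unfolding refined_def
    by (rule abs_less_symmetric_extension[rotated 2]) (auto simp: incseq_SucI B_Suc L_pos less_imp_le)
  then have "e j < B (nat \<bar>k\<bar>) \<and> - B (nat \<bar>k\<bar>) < e (j + 1)" using x by linarith
  then have "M * L (nat \<bar>k\<bar>) < e (j + 1) - e j"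
    using gaps_exceed_scale[of "nat \<bar>k\<bar>"] assms(1) unfolding gaps_exceed_def by auto
  then show ?thesis using one_less_M by (simp add: ilen_refined pos_less_divide_eq mult.commute)
qed

lemma bounded_geometry_refined: "bounded_geometry (range refined) (2 ^ scale_exponent M C)"
proof -
  have ratio: "L a \<le> 2 ^ scale_exponent M C * L b" if "b = Suc a \<or> a = Suc b" for a b
    using that L_le_ratio_L_Suc[of a] L_Suc_le[of b] L_pos[of b]
    by (auto intro: order.trans[OF _ mult_right_mono[of 1]])
  have "nat \<bar>k + 1\<bar> = Suc (nat \<bar>k\<bar>) \<or> nat \<bar>k\<bar> = Suc (nat \<bar>k + 1\<bar>)" for k :: int
    by auto
  then have "L (nat \<bar>k\<bar>) \<le> 2 ^ scale_exponent M C * L (nat \<bar>k + 1\<bar>) \<and>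
      L (nat \<bar>k + 1\<bar>) \<le> 2 ^ scale_exponent M C * L (nat \<bar>k\<bar>)" for k :: int
    using ratio by blast
  moreover have "symmetric_extension B (k + 2) - symmetric_extension B (k + 1) = L (nat \<bar>k + 1\<bar>)"
    for k :: int
    using refined_gap[of "k + 1"] by (simp add: add.assoc)
  ultimately show ?thesis
    unfolding refined_def refined.bounded_geometry_intervals_iff refined_gap by simp
qed

end

theorem mainTheorem17:
  shows "\<exists>K :: real \<Rightarrow> real \<Rightarrow> real.
    \<forall>(C::real) (M::real) (I :: int \<Rightarrow> real set).
      Z_partition I \<and> bounded_geometry (range I) C \<and>
      I 0 = {-1<..<1} \<and> 1 < M
      \<longrightarrow>
      (\<exists>I' :: int \<Rightarrow> real set.
         Z_partition I' \<and>
         I' 0 = I 0 \<and>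
         (\<forall>j. I' (-j) = uminus ` I' j) \<and>
         (\<forall>j k. \<bar>j\<bar> \<le> \<bar>k\<bar> \<longrightarrow> ilen (I' k) \<le> ilen (I' j)) \<and>
         (\<forall>j. \<exists>n::int. ilen (I' j) = 2 powi n) \<and>
         (\<forall>j k. I' j \<noteq> I 0 \<and> I' j \<inter> I k \<noteq> {} \<longrightarrow> ilen (I' j) < ilen (I k) / M) \<and>
         bounded_geometry (range I') (K M C))"
proof (intro exI[of _ "\<lambda>M C. 2 ^ scale_exponent M C"] allI impI, elim conjE)
  fix C M :: real and I :: "int \<Rightarrow> real set"
  assume Z: "Z_partition I" and BG: "bounded_geometry (range I) C" and I_0: "I 0 = {-1<..<1}"
    and M: "1 < M"
  have "\<forall>J\<in>range I. bounded J" using BG by (simp add: bounded_geometry_def)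
  then obtain e where e: "unbounded_strict_mono e" and I_eq: "\<And>k. I k = {e k<..<e (k + 1)}"
    using Z_partition_endpoints[OF Z] by blast
  interpret unbounded_strict_mono e by (rule e)
  have "e 0 = -1 \<and> e 1 = 1"
    using I_0 I_eq[of 0] less_succ[of 0] by (simp add: greaterThanLessThan_eq_iff)
  then interpret symmetric_refinement e C M
    using BG M unfolding I_eq bounded_geometry_intervals_iff by unfold_locales auto
  have ilen_I: "ilen (I k) = e (k + 1) - e k" for k
    using less_succ[of k] by (simp add: I_eq ilen_greaterThanLessThan)
  show "\<exists>I'. Z_partition I' \<and> I' 0 = I 0 \<and> (\<forall>j. I' (- j) = uminus ` I' j) \<and>
      (\<forall>j k. \<bar>j\<bar> \<le> \<bar>k\<bar> \<longrightarrow> ilen (I' k) \<le> ilen (I' j)) \<and> (\<forall>j. \<exists>n. ilen (I' j) = 2 powi n) \<and>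
      (\<forall>j k. I' j \<noteq> I 0 \<and> I' j \<inter> I k \<noteq> {} \<longrightarrow> ilen (I' j) < ilen (I k) / M) \<and>
      bounded_geometry (range I') (2 ^ scale_exponent M C)"
  proof (intro exI[of _ refined] conjI allI impI)
    show "Z_partition refined" by (rule Z_partition_refined)
    show "refined 0 = I 0" by (simp add: refined_0 I_0)
    show "refined (- j) = uminus ` refined j" for j by (rule refined_uminus)
    show "ilen (refined k) \<le> ilen (refined j)" if "\<bar>j\<bar> \<le> \<bar>k\<bar>" for j k
      using that by (rule ilen_refined_antimono)
    show "\<exists>n. ilen (refined j) = 2 powi n" for j by (rule ilen_refined_power_of_two)
    show "ilen (refined j) < ilen (I k) / M" if "refined j \<noteq> I 0 \<and> refined j \<inter> I k \<noteq> {}" for j k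
    proof -
      have "j \<noteq> 0" using that refined_0 I_0 by auto
      moreover have "refined j \<inter> {e k<..<e (k + 1)} \<noteq> {}" using that I_eq by simp
      ultimately show ?thesis unfolding ilen_I by (rule ilen_refined_less)
    qed
    show "bounded_geometry (range refined) (2 ^ scale_exponent M C)" by (rule bounded_geometry_refined)
  qed
qed

end
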